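(* Consider a well-formed execution $\beta$ of the md-value protocol described in the context in which the event $\text{md-value-send}(t,v)_p$ occurs (at writer $p$). Then there is a state $\sigma$ of $\beta$ occurring after the event $\text{md-value-send}(t,v)_p$ such that, for the sender automaton of $p$ and for the server automaton of every $s\in\mathcal{S}$, either (i) that automaton's variable $failed$ is $true$, or (ii) in every state of $\beta$ following $\sigma$, none of that automaton's state variables contains $v$ or any of the coded elements $\Phi_{s'}(v)$, $s'\in\mathcal{S}$.
   Context: System model: an asynchronous message-passing system with a set $\mathcal{W}$ of writers, a set $\mathcal{R}$ of readers and a set $\mathcal{S}$ of $n$ servers, ordered $s_1<\dots<s_n$. Every client–server pair and every server–server pair is joined by a reliable point-to-point channel (a message is eventually delivered if the destination does not crash, even if the sender crashes; no ordering assumption). Processes fail only by crashing; at most $f$ servers crash, $1\le f\le (n-1)/2$; any number of clients may crash. An execution is well-formed if each client starts a new operation only after its previous one completed. Coding: $[n,k]$ MDS code with encoder $\Phi$; $\Phi_s(v)$ is the coded element of value $v$ for server $s$. Tags lie in a totally ordered set $\mathcal{T}$. The md-value protocol as I/O automata. Sender automaton at writer $p$: state variables $failed$ (Boolean, initially false), $active$ (Boolean), $mCount$ (integer counter), a FIFO queue $send\_buff$ (initially empty), a message identifier $mID$, and $currTag$. On input $\text{md-value-send}(t,v)_p$ (if not failed): $mCount$ is incremented, $mID\gets(p,mCount)$, $send\_buff$ is set to the messages $((mID,(t,v),\text{"full"}),s)$ for $s\in\{s_1,\dots,s_{f+1}\}$ in server order, $active\gets true$, $currTag\gets t$. The output $\text{send}$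 action (enabled when not failed) removes the first element of $send\_buff$ and puts its message on the channel to its destination; when $send\_buff$ is empty and $active$ holds, output $\text{md-value-send-ack}(t)_p$ sets $active\gets false$, $currTag\gets\bot$. An internal $\text{fail}$ action sets $failed\gets true$, after which no further actions are taken. Server automaton at $s=s_i$: state variables $failed$ (initially false), a map $status$ from message identifiers to $\{\text{ready},\text{sending},\text{delivered}\}$ (initially undefined, $\bot$), a map $content$ from message identifiers to a (tag, coded element) pair or $\bot$, and per-identifier FIFO output queues $outQueue(mID)$. On receiving $(mID,(t,v),\text{"full"})$ (if not failed and $status(mID)=\bot$): append to $outQueue(mID)$ the messages $(mID,(t,v),\text{"full"})$ for $s_{i+1},\dots,s_{f+1}$ and $(mID,(t,\Phi_{s'}(v)),\text{"coded"})$ for every other server $s'$ outside $\{s_{1},\dots,s_{f+1}\}$; set $status(mID)\gets\text{sending}$ and $content(mID)\gets(t,\Phi_s(v))$. On receiving $(mID,(t,c),\text{"coded"})$ (if not failed and $status(mID)\neq\text{delivered}$): $status(mID)\gets\text{ready}$, $content(mID)\gets(t,c)$. The output $\text{send}$ action (if not failed) sends the first element of $outQueue(mID)$ and removes it; if the queue becomes empty, $status(mID)\gets\text{ready}$. The output $\text{md-value-deliver}(t,c)_s$ is enabled when not failed, $status(mID)=\text{ready}$ and $content(mID)=(t,c)$; it sets $status(mID)\gets\text{delivered}$ and $content(mID)\gets\bot$. An internal $\text{fail}$ action sets $failed\gets true$. The protocol is the composition of these automata with the reliable channel automata.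
   Formalization: Condition (ii) concerns only the copy of v and the coded elements $\Phi_{s'}(v)$ tagged with the identifier mID = (p, mCount+1) created by this md-value-send event, and $\beta$ is fair: every locally controlled action that stays enabled eventually occurs. The paper assumes this as well. *)

theory Defs
  imports Main "HOL-Library.Multiset"
begin

text \<open>Model of the md-value protocol as a composition of I/O automata
(sender automata at the writers, server automata, reliable unordered channels).
Servers s_1 < ... < s_n are represented by the indices 0 < ... < n-1
(index i stands for s_(i+1)); writers are all elements of the type 'w.\<close>

type_synonym 'w mid = "'w \<times> nat"

datatype ('w,'t,'v,'c) msg = Full "'w mid" 't 'v | Coded "'w mid" 't 'c

datatype srv_status = Ready | Sending | Delivered

record ('w,'t,'v,'c) sender_st =
  wfailed :: bool
  active :: bool
  mCount :: nat
  send_buff :: "(('w,'t,'v,'c) msg \<times> nat) list"   (* (message, destination server) *)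
  cur_mID :: "'w mid option"
  currTag :: "'t option"

record ('w,'t,'v,'c) server_st =
  sfailed :: bool
  status :: "'w mid \<Rightarrow> srv_status option"
  content :: "'w mid \<Rightarrow> ('t \<times> 'c) option"
  outQueue :: "'w mid \<Rightarrow> (('w,'t,'v,'c) msg \<times> nat) list"

record ('w,'t,'v,'c) gstate =
  wst :: "'w \<Rightarrow> ('w,'t,'v,'c) sender_st"
  sst :: "nat \<Rightarrow> ('w,'t,'v,'c) server_st"
  net :: "(('w,'t,'v,'c) msg \<times> nat) multiset"

datatype ('w,'t,'v,'c) action =
    MdSend 'w 't 'v                      (* input md-value-send(t,v)_p *)
  | SendW 'w
  | Ack 'w                               (* output md-value-send-ack_p *)
  | FailW 'w
  | Recv "('w,'t,'v,'c) msg" nat          (* channel delivers message to server *)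
  | SendS nat "'w mid"
  | Deliver nat "'w mid"                 (* output md-value-deliver(t,c)_s for mID *)
  | FailS nat

definition init_state :: "('w,'t,'v,'c) gstate" where
  "init_state = \<lparr> wst = (\<lambda>p. \<lparr> wfailed = False, active = False, mCount = 0, send_buff = [],
                                 cur_mID = None, currTag = None \<rparr>),
                  sst = (\<lambda>i. \<lparr> sfailed = False, status = (\<lambda>_. None), content = (\<lambda>_. None),
                                 outQueue = (\<lambda>_. []) \<rparr>),
                  net = {#} \<rparr>"

definition srv_recv :: "nat \<Rightarrow> nat \<Rightarrow> (nat \<Rightarrow> 'v \<Rightarrow> 'c) \<Rightarrow> nat \<Rightarrow> ('w,'t,'v,'c) msg
    \<Rightarrow> ('w,'t,'v,'c) server_st \<Rightarrow> ('w,'t,'v,'c) server_st" where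
  "srv_recv n f \<Phi> i m s = (case m of
      Full M t v \<Rightarrow>
        (if \<not> sfailed s \<and> status s M = None then
           s\<lparr> outQueue := (outQueue s)(M := outQueue s M
                  @ [(Full M t v, j). j \<leftarrow> [Suc i..<Suc f]]
                  @ [(Coded M t (\<Phi> j v), j). j \<leftarrow> [Suc f..<n], j \<noteq> i]),
              status := (status s)(M := Some Sending),
              content := (content s)(M := Some (t, \<Phi> i v)) \<rparr>
         else s)
    | Coded M t c \<Rightarrow>
        (if \<not> sfailed s \<and> status s M \<noteq> Some Delivered then
           s\<lparr> status := (status s)(M := Some Ready),
              content := (content s)(M := Some (t, c)) \<rparr>
         else s))"

text \<open>Transition function of the composed system: None = action not enabled.\<close>
definition trans :: "nat \<Rightarrow> nat \<Rightarrow> (nat \<Rightarrow> 'v \<Rightarrow> 'c) \<Rightarrow> ('w,'t,'v,'c) action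
    \<Rightarrow> ('w,'t,'v,'c) gstate \<Rightarrow> ('w,'t,'v,'c) gstate option" where
  "trans n f \<Phi> a \<sigma> = (case a of
      MdSend p t v \<Rightarrow> (let w = wst \<sigma> p; M = (p, Suc (mCount w)) in
         Some (if wfailed w then \<sigma> else
           \<sigma>\<lparr> wst := (wst \<sigma>)(p := w\<lparr> mCount := Suc (mCount w), cur_mID := Some M,
                 send_buff := [(Full M t v, j). j \<leftarrow> [0..<Suc f]],
                 active := True, currTag := Some t \<rparr>) \<rparr>))
    | SendW p \<Rightarrow> (let w = wst \<sigma> p in
         if \<not> wfailed w \<and> send_buff w \<noteq> [] then
           Some (\<sigma>\<lparr> wst := (wst \<sigma>)(p := w\<lparr> send_buff := tl (send_buff w) \<rparr>),
                    net := net \<sigma> + {# hd (send_buff w) #} \<rparr>)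
         else None)
    | Ack p \<Rightarrow> (let w = wst \<sigma> p in
         if \<not> wfailed w \<and> send_buff w = [] \<and> active w then
           Some (\<sigma>\<lparr> wst := (wst \<sigma>)(p := w\<lparr> active := False, currTag := None \<rparr>) \<rparr>)
         else None)
    | FailW p \<Rightarrow> Some (\<sigma>\<lparr> wst := (wst \<sigma>)(p := (wst \<sigma> p)\<lparr> wfailed := True \<rparr>) \<rparr>)
    | Recv m i \<Rightarrow>
         (if i < n \<and> (m, i) \<in># net \<sigma> then
            Some (\<sigma>\<lparr> net := net \<sigma> - {# (m, i) #},
                     sst := (sst \<sigma>)(i := srv_recv n f \<Phi> i m (sst \<sigma> i)) \<rparr>)
          else None)
    | SendS i M \<Rightarrow> (let s = sst \<sigma> i; q = outQueue s M in
         if i < n \<and> \<not> sfailed s \<and> q \<noteq> [] then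
           Some (\<sigma>\<lparr> sst := (sst \<sigma>)(i := s\<lparr> outQueue := (outQueue s)(M := tl q),
                       status := (if tl q = [] then (status s)(M := Some Ready) else status s) \<rparr>),
                    net := net \<sigma> + {# hd q #} \<rparr>)
         else None)
    | Deliver i M \<Rightarrow> (let s = sst \<sigma> i in
         if i < n \<and> \<not> sfailed s \<and> status s M = Some Ready \<and> content s M \<noteq> None then
           Some (\<sigma>\<lparr> sst := (sst \<sigma>)(i := s\<lparr> status := (status s)(M := Some Delivered),
                                               content := (content s)(M := None) \<rparr>) \<rparr>)
         else None)
    | FailS i \<Rightarrow> (if i < n then Some (\<sigma>\<lparr> sst := (sst \<sigma>)(i := (sst \<sigma> i)\<lparr> sfailed := True \<rparr>) \<rparr>)
                  else None))"

definition enabled :: "nat \<Rightarrow> nat \<Rightarrow> (nat \<Rightarrow> 'v \<Rightarrow> 'c) \<Rightarrow> ('w,'t,'v,'c) action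
    \<Rightarrow> ('w,'t,'v,'c) gstate \<Rightarrow> bool" where
  "enabled n f \<Phi> a \<sigma> \<longleftrightarrow> trans n f \<Phi> a \<sigma> \<noteq> None"

text \<open>Locally controlled (output/internal) actions subject to fairness; md-value-send
is an input from the environment, crashes are not forced.\<close>
fun locally_controlled :: "('w,'t,'v,'c) action \<Rightarrow> bool" where
  "locally_controlled (MdSend _ _ _) = False"
| "locally_controlled (FailW _) = False"
| "locally_controlled (FailS _) = False"
| "locally_controlled _ = True"

text \<open>An execution is an infinite sequence of states ex 0, ex 1, ...; act k is the
action taken from ex k to ex (Suc k), None meaning a stuttering (no) step
(finite executions are padded by stuttering).\<close>
definition is_execution :: "nat \<Rightarrow> nat \<Rightarrow> (nat \<Rightarrow> 'v \<Rightarrow> 'c) \<Rightarrow> (nat \<Rightarrow> ('w,'t,'v,'c) gstate)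
    \<Rightarrow> (nat \<Rightarrow> ('w,'t,'v,'c) action option) \<Rightarrow> bool" where
  "is_execution n f \<Phi> ex act \<longleftrightarrow> ex 0 = init_state \<and>
     (\<forall>k. case act k of None \<Rightarrow> ex (Suc k) = ex k
                      | Some a \<Rightarrow> trans n f \<Phi> a (ex k) = Some (ex (Suc k)))"

text \<open>Weak fairness: no locally controlled action stays enabled forever without occurring.
(Channel deliveries are locally controlled actions of the channels: reliability.)\<close>
definition fair :: "nat \<Rightarrow> nat \<Rightarrow> (nat \<Rightarrow> 'v \<Rightarrow> 'c) \<Rightarrow> (nat \<Rightarrow> ('w,'t,'v,'c) gstate)
    \<Rightarrow> (nat \<Rightarrow> ('w,'t,'v,'c) action option) \<Rightarrow> bool" where
  "fair n f \<Phi> ex act \<longleftrightarrow>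
     (\<forall>a. locally_controlled a \<longrightarrow>
        \<not> (\<exists>k0. \<forall>k\<ge>k0. enabled n f \<Phi> a (ex k) \<and> act k \<noteq> Some a))"

definition crash_bound :: "nat \<Rightarrow> nat \<Rightarrow> (nat \<Rightarrow> ('w,'t,'v,'c) gstate) \<Rightarrow> bool" where
  "crash_bound n f ex \<longleftrightarrow> (\<forall>k. card {i. i < n \<and> sfailed (sst (ex k) i)} \<le> f)"

definition well_formed :: "(nat \<Rightarrow> ('w,'t,'v,'c) action option) \<Rightarrow> bool" where
  "well_formed act \<longleftrightarrow>
     (\<forall>p i j t v t' v'. i < j \<and> act i = Some (MdSend p t v) \<and> act j = Some (MdSend p t' v')
        \<longrightarrow> (\<exists>k. i < k \<and> k < j \<and> act k = Some (Ack p)))"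

definition mds_code :: "nat \<Rightarrow> nat \<Rightarrow> (nat \<Rightarrow> 'v \<Rightarrow> 'c) \<Rightarrow> bool" where
  "mds_code n k \<Phi> \<longleftrightarrow> 1 \<le> k \<and> k \<le> n \<and>
     (\<forall>S v v'. S \<subseteq> {..<n} \<and> card S = k \<and> (\<forall>s\<in>S. \<Phi> s v = \<Phi> s v') \<longrightarrow> v = v')"

definition msg_carries :: "nat \<Rightarrow> (nat \<Rightarrow> 'v \<Rightarrow> 'c) \<Rightarrow> 'w mid \<Rightarrow> 'v \<Rightarrow> ('w,'t,'v,'c) msg \<Rightarrow> bool" where
  "msg_carries n \<Phi> M v m \<longleftrightarrow>
     (\<exists>t. m = Full M t v \<or> (\<exists>s'<n. m = Coded M t (\<Phi> s' v)))"

definition sender_holds :: "nat \<Rightarrow> (nat \<Rightarrow> 'v \<Rightarrow> 'c) \<Rightarrow> 'w mid \<Rightarrow> 'v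
    \<Rightarrow> ('w,'t,'v,'c) sender_st \<Rightarrow> bool" where
  "sender_holds n \<Phi> M v w \<longleftrightarrow> (\<exists>m d. (m, d) \<in> set (send_buff w) \<and> msg_carries n \<Phi> M v m)"

definition server_holds :: "nat \<Rightarrow> (nat \<Rightarrow> 'v \<Rightarrow> 'c) \<Rightarrow> 'w mid \<Rightarrow> 'v
    \<Rightarrow> ('w,'t,'v,'c) server_st \<Rightarrow> bool" where
  "server_holds n \<Phi> M v s \<longleftrightarrow>
     (\<exists>t s'. s' < n \<and> content s M = Some (t, \<Phi> s' v)) \<or>
     (\<exists>m d. (m, d) \<in> set (outQueue s M) \<and> msg_carries n \<Phi> M v m)"

end

theory Submission
  imports Defs
begin

text \<open>
  Fix the identifier M = (p, c + 1) created by md-value-send(t,v) at p. Since the counter of p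
  never decreases, no later md-value-send can refill p's buffer with M, so all M-data only moves
  forward: from p's send buffer into the channels, from the channels into server queues and
  contents, and out again by send and deliver actions. A weighted count of this data never
  increases from then on, and whenever it stays the same the M-part of the global state is
  untouched; hence the M-part is eventually frozen. Once the set of crashed processes has
  stabilised as well, a live process still holding M-data keeps a send or deliver action for M
  enabled forever; by fairness that action occurs and changes the frozen M-part.
\<close>

lemma eventually_constant_of_descent:
  fixes g :: "nat \<Rightarrow> nat"
  assumes "\<And>k. k0 \<le> k \<Longrightarrow> g (Suc k) < g k \<or> g (Suc k) = g k \<and> V (Suc k) = V k"
  shows "\<exists>K\<ge>k0. \<forall>k\<ge>K. V k = V K"
  using assms
proof (induction "g k0" arbitrary: k0 rule: less_induct)
  case less
  have g_mono: "g k \<le> g k0" if "k0 \<le> k" for k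
    using that by (induction k rule: dec_induct) (use less.prems in fastforce)+
  show ?case
  proof (cases "\<exists>k\<ge>k0. g (Suc k) < g k")
    case True
    then obtain k where k: "k0 \<le> k" "g (Suc k) < g k" by blast
    have "\<exists>K\<ge>Suc k. \<forall>k'\<ge>K. V k' = V K"
      using g_mono[OF k(1)] k less.prems by (intro less.hyps) auto
    then show ?thesis using k(1) by (meson Suc_leD le_trans)
  next
    case False
    have "V k = V k0" if "k0 \<le> k" for k
      using that by (induction k rule: dec_induct) (use less.prems False in fastforce)+
    then show ?thesis by blast
  qed
qed

lemma eventually_constant_of_mono_subset:
  assumes "finite A" "\<And>k. F k \<subseteq> A" "\<And>k. F k \<subseteq> F (Suc k)"
  shows "\<exists>K\<ge>k0. \<forall>k\<ge>K. F k = F K"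
proof (rule eventually_constant_of_descent[where g = "\<lambda>k. card (A - F k)"])
  fix k
  have "A - F (Suc k) \<subseteq> A - F k" using assms(3) by blast
  moreover have "A - F (Suc k) \<noteq> A - F k" if "F (Suc k) \<noteq> F k"
    using that assms(2,3) by blast
  ultimately show "card (A - F (Suc k)) < card (A - F k) \<or>
      card (A - F (Suc k)) = card (A - F k) \<and> F (Suc k) = F k"
    using assms(1) by (metis finite_Diff psubset_card_mono psubset_eq)
qed

lemma list_comprehension_filter: "[g x. x \<leftarrow> xs, P x] = map g (filter P xs)"
  by (induction xs) auto

lemma set_tl_subset: "x \<in> set (tl xs) \<Longrightarrow> x \<in> set xs"
  by (cases xs) auto

lemma filter_tl:
  "xs \<noteq> [] \<Longrightarrow> filter P xs = (if P (hd xs) then hd xs # filter P (tl xs) else filter P (tl xs))"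
  by (cases xs) auto

lemma sum_update_add:
  fixes g g' :: "nat \<Rightarrow> nat"
  assumes "i < n" "\<And>j. j \<noteq> i \<Longrightarrow> g' j = g j"
  shows "(\<Sum>j<n. g' j) + g i = (\<Sum>j<n. g j) + g' i"
proof -
  have "finite {..<n}" "i \<in> {..<n}" using assms(1) by auto
  moreover have "(\<Sum>j\<in>{..<n}-{i}. g' j) = (\<Sum>j\<in>{..<n}-{i}. g j)" using assms(2) by auto
  ultimately show ?thesis by (simp add: sum.remove)
qed


fun mid_of :: "('w,'t,'v,'c) msg \<Rightarrow> 'w mid" where
  "mid_of (Full M _ _) = M"
| "mid_of (Coded M _ _) = M"

fun is_full :: "('w,'t,'v,'c) msg \<Rightarrow> bool" where
  "is_full (Full _ _ _) = True"
| "is_full (Coded _ _ _) = False"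

definition buffer_inv :: "nat \<Rightarrow> ('w,'t,'v,'c) gstate \<Rightarrow> bool" where
  "buffer_inv f \<sigma> \<longleftrightarrow> (\<forall>q m d. (m, d) \<in> set (send_buff (wst \<sigma> q)) \<longrightarrow>
      mid_of m = (q, mCount (wst \<sigma> q)) \<and> (is_full m \<longrightarrow> d \<le> f))"

definition channel_inv :: "nat \<Rightarrow> ('w,'t,'v,'c) gstate \<Rightarrow> bool" where
  "channel_inv f \<sigma> \<longleftrightarrow> (\<forall>m d. (m, d) \<in># net \<sigma> \<longrightarrow> is_full m \<longrightarrow> d \<le> f)"

definition server_inv :: "nat \<Rightarrow> ('w,'t,'v,'c) server_st \<Rightarrow> bool" where
  "server_inv f s \<longleftrightarrow> (\<forall>M.
      (\<forall>m d. (m, d) \<in> set (outQueue s M) \<longrightarrow> mid_of m = M \<and> (is_full m \<longrightarrow> d \<le> f))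
    \<and> (status s M = None \<longrightarrow> content s M = None \<and> outQueue s M = [])
    \<and> (status s M = Some Delivered \<longrightarrow> content s M = None)
    \<and> (status s M = Some Sending \<longrightarrow> outQueue s M \<noteq> []))"

definition md_inv :: "nat \<Rightarrow> ('w,'t,'v,'c) gstate \<Rightarrow> bool" where
  "md_inv f \<sigma> \<longleftrightarrow> buffer_inv f \<sigma> \<and> channel_inv f \<sigma> \<and> (\<forall>i. server_inv f (sst \<sigma> i))"

lemmas md_inv_defs = md_inv_def buffer_inv_def channel_inv_def server_inv_def

lemma server_inv_status_Ready:
  assumes "server_inv f s" "outQueue s M = []" "content s M \<noteq> None"
  shows "status s M = Some Ready"
proof -
  have "status s M \<noteq> None" "status s M \<noteq> Some Delivered" "status s M \<noteq> Some Sending"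
    using assms(1)[unfolded server_inv_def, THEN spec[of _ M]] assms(2,3) by auto
  then show ?thesis by (cases "status s M"; cases "the (status s M)") auto
qed

lemma md_inv_init: "md_inv f init_state"
  by (simp add: md_inv_defs init_state_def)

lemma srv_recv_sfailed: "sfailed (srv_recv n f \<Phi> i m s) = sfailed s"
  by (cases m) (auto simp: srv_recv_def)

text \<open>
  Full copies only go to servers of index at most f, which then always queue a coded element
  for the server of index f + 1; hence a Sending server never has an empty queue.
\<close>
lemma server_inv_srv_recv:
  assumes "server_inv f s" "is_full m \<Longrightarrow> i \<le> f" "Suc f < n"
  shows "server_inv f (srv_recv n f \<Phi> i m s)"
proof (cases m)
  case (Full M t v)
  let ?C = "[(Coded M t (\<Phi> j v), j). j \<leftarrow> [Suc f..<n], j \<noteq> i]"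
  have "i \<le> f" using assms(2) Full by simp
  then have "?C \<noteq> []" using assms(3) by (simp add: list_comprehension_filter filter_empty_conv)
  then show ?thesis using assms(1) unfolding Full srv_recv_def server_inv_def
    by (auto split: if_splits)
next
  case (Coded M t c)
  then show ?thesis using assms(1) unfolding srv_recv_def server_inv_def by (auto split: if_splits)
qed

lemma md_inv_Recv:
  assumes "md_inv f \<sigma>" "trans n f \<Phi> (Recv m i) \<sigma> = Some \<sigma>'" "Suc f < n"
  shows "md_inv f \<sigma>'"
proof -
  have "(m, i) \<in># net \<sigma>" and \<sigma>': "\<sigma>' = \<sigma>\<lparr> net := net \<sigma> - {# (m, i) #},
      sst := (sst \<sigma>)(i := srv_recv n f \<Phi> i m (sst \<sigma> i)) \<rparr>"
    using assms(2) by (auto simp: trans_def split: if_splits)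
  then have "is_full m \<Longrightarrow> i \<le> f" using assms(1) unfolding md_inv_def channel_inv_def by blast
  then have "server_inv f (srv_recv n f \<Phi> i m (sst \<sigma> i))"
    using assms(1,3) server_inv_srv_recv unfolding md_inv_def by blast
  then show ?thesis using assms(1) unfolding \<sigma>' md_inv_def buffer_inv_def channel_inv_def
    by (auto dest: in_diffD)
qed

lemma md_inv_SendW:
  assumes "md_inv f \<sigma>" "trans n f \<Phi> (SendW q) \<sigma> = Some \<sigma>'"
  shows "md_inv f \<sigma>'"
proof -
  let ?b = "send_buff (wst \<sigma> q)"
  have "?b \<noteq> []" and \<sigma>': "\<sigma>' = \<sigma>\<lparr> wst := (wst \<sigma>)(q := (wst \<sigma> q)\<lparr> send_buff := tl ?b \<rparr>),
      net := net \<sigma> + {# hd ?b #} \<rparr>"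
    using assms(2) by (auto simp: trans_def Let_def split: if_splits)
  then have "hd ?b \<in> set ?b" by simp
  then show ?thesis using assms(1) unfolding \<sigma>' md_inv_defs
    by (auto simp: split_beta dest: set_tl_subset) (metis prod.collapse)+
qed

lemma md_inv_SendS:
  assumes "md_inv f \<sigma>" "trans n f \<Phi> (SendS i M) \<sigma> = Some \<sigma>'"
  shows "md_inv f \<sigma>'"
proof -
  let ?s = "sst \<sigma> i"
  let ?q = "outQueue ?s M"
  have "?q \<noteq> []" and \<sigma>': "\<sigma>' = \<sigma>\<lparr> sst := (sst \<sigma>)(i := ?s\<lparr> outQueue := (outQueue ?s)(M := tl ?q),
      status := (if tl ?q = [] then (status ?s)(M := Some Ready) else status ?s) \<rparr>),
      net := net \<sigma> + {# hd ?q #} \<rparr>"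
    using assms(2) by (auto simp: trans_def Let_def split: if_splits)
  then have hd_in: "hd ?q \<in> set ?q" by simp
  have "server_inv f (sst \<sigma>' i)"
    using assms(1) \<open>?q \<noteq> []\<close> unfolding \<sigma>' md_inv_def server_inv_def
    by (auto simp del: not_None_eq dest: set_tl_subset)
  moreover have "channel_inv f \<sigma>'"
    unfolding channel_inv_def
  proof (intro allI impI)
    fix m d assume "(m, d) \<in># net \<sigma>'" "is_full m"
    then have "(m, d) = hd ?q \<or> (m, d) \<in># net \<sigma>" by (simp add: \<sigma>')
    then have "(m, d) \<in> set ?q \<or> (m, d) \<in># net \<sigma>" using hd_in by metis
    then show "d \<le> f"
      using assms(1) \<open>is_full m\<close> unfolding md_inv_def channel_inv_def server_inv_def by blast
  qed
  ultimately show ?thesis using assms(1) unfolding \<sigma>' md_inv_def buffer_inv_def by auto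
qed

lemma md_inv_step:
  assumes "md_inv f \<sigma>" "trans n f \<Phi> a \<sigma> = Some \<sigma>'" "Suc f < n"
  shows "md_inv f \<sigma>'"
proof (cases a)
  case Recv
  then show ?thesis using md_inv_Recv[OF assms(1) _ assms(3)] assms(2) by simp
next
  case SendW
  then show ?thesis using md_inv_SendW[OF assms(1)] assms(2) by simp
next
  case SendS
  then show ?thesis using md_inv_SendS[OF assms(1)] assms(2) by simp
qed (use assms in \<open>auto simp: trans_def Let_def md_inv_defs split: if_splits\<close>)

text \<open>
  A server that has not seen M yet weighs 3n: on receiving the first full copy it queues at most
  n messages of weight 3, so consuming a message of weight 2 from the channels still lowers the
  total.
\<close>
definition server_weight :: "nat \<Rightarrow> 'w mid \<Rightarrow> ('w,'t,'v,'c) server_st \<Rightarrow> nat" where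
  "server_weight n M s = (if status s M = None then 3 * n else 0)
     + (if content s M = None then 0 else 1) + 3 * length (outQueue s M)"

definition buffered_part :: "'w mid \<Rightarrow> ('w,'t,'v,'c) gstate \<Rightarrow> (('w,'t,'v,'c) msg \<times> nat) list" where
  "buffered_part M \<sigma> = filter (\<lambda>x. mid_of (fst x) = M) (send_buff (wst \<sigma> (fst M)))"

definition in_transit :: "'w mid \<Rightarrow> (('w,'t,'v,'c) msg \<times> nat) multiset \<Rightarrow> nat" where
  "in_transit M N = size (filter_mset (\<lambda>x. mid_of (fst x) = M) N)"

definition pending :: "nat \<Rightarrow> 'w mid \<Rightarrow> ('w,'t,'v,'c) gstate \<Rightarrow> nat" where
  "pending n M \<sigma> = 3 * length (buffered_part M \<sigma>) + 2 * in_transit M (net \<sigma>)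
     + (\<Sum>i<n. server_weight n M (sst \<sigma> i))"

type_synonym ('w,'t,'v,'c) mid_record =
  "srv_status option \<times> ('t \<times> 'c) option \<times> (('w,'t,'v,'c) msg \<times> nat) list"

definition server_view :: "'w mid \<Rightarrow> ('w,'t,'v,'c) server_st \<Rightarrow> ('w,'t,'v,'c) mid_record" where
  "server_view M s = (status s M, content s M, outQueue s M)"

definition mid_view :: "nat \<Rightarrow> 'w mid \<Rightarrow> ('w,'t,'v,'c) gstate
    \<Rightarrow> (('w,'t,'v,'c) msg \<times> nat) list \<times> ('w,'t,'v,'c) mid_record list" where
  "mid_view n M \<sigma> = (buffered_part M \<sigma>, map (\<lambda>i. server_view M (sst \<sigma> i)) [0..<n])"

abbreviation descends :: "nat \<Rightarrow> 'w mid \<Rightarrow> ('w,'t,'v,'c) gstate \<Rightarrow> ('w,'t,'v,'c) gstate \<Rightarrow> bool" where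
  "descends n M \<sigma> \<sigma>' \<equiv> pending n M \<sigma>' < pending n M \<sigma>
     \<or> pending n M \<sigma>' = pending n M \<sigma> \<and> mid_view n M \<sigma>' = mid_view n M \<sigma>"

lemma in_transit_add_mset:
  "in_transit M (add_mset x N) = in_transit M N + (if mid_of (fst x) = M then 1 else 0)"
  by (simp add: in_transit_def)

lemma in_transit_remove:
  assumes "x \<in># N"
  shows "in_transit M (N - {#x#}) + (if mid_of (fst x) = M then 1 else 0) = in_transit M N"
  using in_transit_add_mset[of M x "N - {#x#}"] by (simp add: insert_DiffM[OF assms])

lemma srv_recv_other_mid:
  "mid_of m \<noteq> M \<Longrightarrow> server_view M (srv_recv n f \<Phi> i m s) = server_view M s"
  by (cases m) (auto simp: srv_recv_def server_view_def)

lemma server_weight_cong: "server_view M s' = server_view M s \<Longrightarrow> server_weight n M s' = server_weight n M s"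
  by (simp add: server_view_def server_weight_def)

lemma mid_view_eqD:
  assumes "mid_view n M \<sigma>' = mid_view n M \<sigma>"
  shows "buffered_part M \<sigma>' = buffered_part M \<sigma>"
    and "i < n \<Longrightarrow> server_view M (sst \<sigma>' i) = server_view M (sst \<sigma> i)"
  using assms by (auto simp: mid_view_def map_eq_conv)

lemma descends_if_unchanged:
  assumes "mid_view n M \<sigma>' = mid_view n M \<sigma>" "in_transit M (net \<sigma>') = in_transit M (net \<sigma>)"
  shows "descends n M \<sigma> \<sigma>'"
proof -
  have "(\<Sum>i<n. server_weight n M (sst \<sigma>' i)) = (\<Sum>i<n. server_weight n M (sst \<sigma> i))"
    using mid_view_eqD(2)[OF assms(1)] by (intro sum.cong refl server_weight_cong) simp
  then have "pending n M \<sigma>' = pending n M \<sigma>"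
    using mid_view_eqD(1)[OF assms(1)] assms(2) by (simp add: pending_def)
  then show ?thesis using assms(1) by simp
qed

lemma pending_server_step:
  assumes "wst \<sigma>' = wst \<sigma>" "i < n" "\<And>j. j \<noteq> i \<Longrightarrow> sst \<sigma>' j = sst \<sigma> j"
  shows "pending n M \<sigma>' + 2 * in_transit M (net \<sigma>) + server_weight n M (sst \<sigma> i)
       = pending n M \<sigma> + 2 * in_transit M (net \<sigma>') + server_weight n M (sst \<sigma>' i)"
  using sum_update_add[of i n "\<lambda>j. server_weight n M (sst \<sigma> j)" "\<lambda>j. server_weight n M (sst \<sigma>' j)"] assms
  by (simp add: pending_def buffered_part_def)

lemma mid_view_server_step:
  assumes "wst \<sigma>' = wst \<sigma>" "\<And>j. j \<noteq> i \<Longrightarrow> sst \<sigma>' j = sst \<sigma> j"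
    and "server_view M (sst \<sigma>' i) = server_view M (sst \<sigma> i)"
  shows "mid_view n M \<sigma>' = mid_view n M \<sigma>"
proof -
  have "server_view M (sst \<sigma>' j) = server_view M (sst \<sigma> j)" for j
    using assms(2,3) by (cases "j = i") auto
  then show ?thesis using assms(1) by (simp add: mid_view_def buffered_part_def)
qed

lemma pending_writer_step:
  assumes "sst \<sigma>' = sst \<sigma>"
  shows "pending n M \<sigma>' + 3 * length (buffered_part M \<sigma>) + 2 * in_transit M (net \<sigma>)
       = pending n M \<sigma> + 3 * length (buffered_part M \<sigma>') + 2 * in_transit M (net \<sigma>')"
  using assms by (simp add: pending_def)

lemma mid_view_writer_step:
  "sst \<sigma>' = sst \<sigma> \<Longrightarrow> buffered_part M \<sigma>' = buffered_part M \<sigma> \<Longrightarrow> mid_view n M \<sigma>' = mid_view n M \<sigma>"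
  by (simp add: mid_view_def)

lemma length_srv_recv_queue:
  assumes "Suc f \<le> n"
  shows "length ([(Full M t v, j). j \<leftarrow> [Suc i..<Suc f]] @ [(Coded M t (\<Phi> j v), j). j \<leftarrow> [Suc f..<n], j \<noteq> i])
     \<le> n" (is "length (?F @ ?C) \<le> n")
proof -
  have "length ?C \<le> n - Suc f"
    by (simp add: list_comprehension_filter order_trans[OF length_filter_le])
  moreover have "length ?F \<le> f" by auto
  ultimately show ?thesis using assms by simp
qed

lemma server_weight_srv_recv:
  assumes "mid_of m = M" "Suc f \<le> n"
  shows "server_weight n M (srv_recv n f \<Phi> i m s) \<le> server_weight n M s + 1"
proof (cases m)
  case (Full M t v)
  then show ?thesis using assms length_srv_recv_queue[OF assms(2), of M t v i \<Phi>]
    unfolding srv_recv_def server_weight_def by auto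
qed (use assms in \<open>auto simp: srv_recv_def server_weight_def\<close>)

lemma descends_Recv:
  assumes "trans n f \<Phi> (Recv m i) \<sigma> = Some \<sigma>'" "Suc f \<le> n"
  shows "descends n M \<sigma> \<sigma>'"
proof -
  have "(m, i) \<in># net \<sigma>" "i < n" and \<sigma>': "\<sigma>' = \<sigma>\<lparr> net := net \<sigma> - {# (m, i) #},
      sst := (sst \<sigma>)(i := srv_recv n f \<Phi> i m (sst \<sigma> i)) \<rparr>"
    using assms(1) by (auto simp: trans_def split: if_splits)
  have step: "pending n M \<sigma>' + 2 * in_transit M (net \<sigma>) + server_weight n M (sst \<sigma> i)
      = pending n M \<sigma> + 2 * in_transit M (net \<sigma>') + server_weight n M (sst \<sigma>' i)"
    using \<open>i < n\<close> by (intro pending_server_step) (auto simp: \<sigma>')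
  have transit: "in_transit M (net \<sigma>') + (if mid_of m = M then 1 else 0) = in_transit M (net \<sigma>)"
    using in_transit_remove[OF \<open>(m, i) \<in># net \<sigma>\<close>] by (simp add: \<sigma>')
  show ?thesis
  proof (cases "mid_of m = M")
    case True
    then have "server_weight n M (sst \<sigma>' i) \<le> server_weight n M (sst \<sigma> i) + 1"
      using server_weight_srv_recv[OF True assms(2)] by (simp add: \<sigma>')
    then show ?thesis using step transit True by simp
  next
    case False
    then have "mid_view n M \<sigma>' = mid_view n M \<sigma>"
      by (intro mid_view_server_step[of _ _ i]) (auto simp: \<sigma>' srv_recv_other_mid)
    then show ?thesis using transit False by (intro descends_if_unchanged) simp_all
  qed
qed

lemma descends_SendS:
  assumes "trans n f \<Phi> (SendS i M') \<sigma> = Some \<sigma>'" "md_inv f \<sigma>"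
  shows "descends n M \<sigma> \<sigma>'"
proof -
  let ?s = "sst \<sigma> i"
  let ?q = "outQueue ?s M'"
  have "?q \<noteq> []" "i < n" and \<sigma>': "\<sigma>' = \<sigma>\<lparr> sst := (sst \<sigma>)(i := ?s\<lparr> outQueue := (outQueue ?s)(M' := tl ?q),
      status := (if tl ?q = [] then (status ?s)(M' := Some Ready) else status ?s) \<rparr>),
      net := net \<sigma> + {# hd ?q #} \<rparr>"
    using assms(1) by (auto simp: trans_def Let_def split: if_splits)
  have step: "pending n M \<sigma>' + 2 * in_transit M (net \<sigma>) + server_weight n M (sst \<sigma> i)
      = pending n M \<sigma> + 2 * in_transit M (net \<sigma>') + server_weight n M (sst \<sigma>' i)"
    using \<open>i < n\<close> by (intro pending_server_step) (auto simp: \<sigma>')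
  have transit: "in_transit M (net \<sigma>') = in_transit M (net \<sigma>) + (if mid_of (fst (hd ?q)) = M then 1 else 0)"
    by (simp add: \<sigma>' in_transit_add_mset)
  show ?thesis
  proof (cases "M' = M")
    case True
    then have "server_weight n M (sst \<sigma>' i) + 3 \<le> server_weight n M (sst \<sigma> i)"
      using \<open>?q \<noteq> []\<close> unfolding \<sigma>' server_weight_def by (cases ?q) auto
    then show ?thesis using step transit by (auto split: if_splits)
  next
    case False
    have "hd ?q \<in> set ?q" using \<open>?q \<noteq> []\<close> by simp
    then have "mid_of (fst (hd ?q)) = M'" using assms(2) unfolding md_inv_def server_inv_def
      by (metis prod.collapse)
    moreover have "mid_view n M \<sigma>' = mid_view n M \<sigma>"
      using False by (intro mid_view_server_step[of _ _ i]) (auto simp: \<sigma>' server_view_def)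
    ultimately show ?thesis using transit False by (intro descends_if_unchanged) simp_all
  qed
qed

lemma descends_Deliver:
  assumes "trans n f \<Phi> (Deliver i M') \<sigma> = Some \<sigma>'"
  shows "descends n M \<sigma> \<sigma>'"
proof -
  let ?s = "sst \<sigma> i"
  have "content ?s M' \<noteq> None" "i < n" and \<sigma>': "\<sigma>' = \<sigma>\<lparr> sst := (sst \<sigma>)(i := ?s\<lparr>
      status := (status ?s)(M' := Some Delivered), content := (content ?s)(M' := None) \<rparr>) \<rparr>"
    using assms(1) by (auto simp: trans_def Let_def split: if_splits)
  show ?thesis
  proof (cases "M' = M")
    case True
    have "pending n M \<sigma>' + 2 * in_transit M (net \<sigma>) + server_weight n M (sst \<sigma> i)
        = pending n M \<sigma> + 2 * in_transit M (net \<sigma>') + server_weight n M (sst \<sigma>' i)"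
      using \<open>i < n\<close> by (intro pending_server_step) (auto simp: \<sigma>')
    moreover have "server_weight n M (sst \<sigma>' i) < server_weight n M (sst \<sigma> i)"
      using True \<open>content ?s M' \<noteq> None\<close> unfolding \<sigma>' server_weight_def by auto
    ultimately show ?thesis by (simp add: \<sigma>')
  next
    case False
    then have "mid_view n M \<sigma>' = mid_view n M \<sigma>"
      by (intro mid_view_server_step[of _ _ i]) (auto simp: \<sigma>' server_view_def)
    then show ?thesis by (intro descends_if_unchanged) (simp_all add: \<sigma>')
  qed
qed

lemma descends_FailS:
  assumes "trans n f \<Phi> (FailS i) \<sigma> = Some \<sigma>'"
  shows "descends n M \<sigma> \<sigma>'"
proof -
  have \<sigma>': "\<sigma>' = \<sigma>\<lparr> sst := (sst \<sigma>)(i := (sst \<sigma> i)\<lparr> sfailed := True \<rparr>) \<rparr>"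
    using assms by (auto simp: trans_def split: if_splits)
  then have "mid_view n M \<sigma>' = mid_view n M \<sigma>"
    by (intro mid_view_server_step[of _ _ i]) (auto simp: server_view_def)
  then show ?thesis by (intro descends_if_unchanged) (simp_all add: \<sigma>')
qed

lemma descends_MdSend:
  assumes "trans n f \<Phi> (MdSend q t v) \<sigma> = Some \<sigma>'"
    and retired: "wfailed (wst \<sigma> (fst M)) \<or> snd M \<le> mCount (wst \<sigma> (fst M))"
  shows "descends n M \<sigma> \<sigma>'"
proof (cases "wfailed (wst \<sigma> q)")
  case True
  then have "\<sigma>' = \<sigma>" using assms(1) by (simp add: trans_def Let_def)
  then show ?thesis by simp
next
  case False
  let ?w = "wst \<sigma> q"
  let ?M = "(q, Suc (mCount ?w))"
  have \<sigma>': "\<sigma>' = \<sigma>\<lparr> wst := (wst \<sigma>)(q := ?w\<lparr> mCount := Suc (mCount ?w), cur_mID := Some ?M,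
      send_buff := [(Full ?M t v, j). j \<leftarrow> [0..<Suc f]], active := True, currTag := Some t \<rparr>) \<rparr>"
    using assms(1) False by (simp add: trans_def Let_def)
  have "buffered_part M \<sigma>' = [] \<or> buffered_part M \<sigma>' = buffered_part M \<sigma>"
  proof (cases "q = fst M")
    case True
    then have "?M \<noteq> M" using retired False by (cases M) auto
    then show ?thesis using True unfolding buffered_part_def \<sigma>' by auto
  qed (auto simp: buffered_part_def \<sigma>')
  moreover have "pending n M \<sigma>' + 3 * length (buffered_part M \<sigma>)
      = pending n M \<sigma> + 3 * length (buffered_part M \<sigma>')"
    using pending_writer_step[of \<sigma>' \<sigma> n M] by (simp add: \<sigma>')
  ultimately show ?thesis
    using mid_view_writer_step[of \<sigma>' \<sigma> M n] by (cases "buffered_part M \<sigma>") (auto simp: \<sigma>')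
qed

lemma descends_SendW:
  assumes "trans n f \<Phi> (SendW q) \<sigma> = Some \<sigma>'" "md_inv f \<sigma>"
  shows "descends n M \<sigma> \<sigma>'"
proof -
  let ?b = "send_buff (wst \<sigma> q)"
  have "?b \<noteq> []" and \<sigma>': "\<sigma>' = \<sigma>\<lparr> wst := (wst \<sigma>)(q := (wst \<sigma> q)\<lparr> send_buff := tl ?b \<rparr>),
      net := net \<sigma> + {# hd ?b #} \<rparr>"
    using assms(1) by (auto simp: trans_def Let_def split: if_splits)
  have step: "pending n M \<sigma>' + 3 * length (buffered_part M \<sigma>) + 2 * in_transit M (net \<sigma>)
      = pending n M \<sigma> + 3 * length (buffered_part M \<sigma>') + 2 * in_transit M (net \<sigma>')"
    by (rule pending_writer_step) (simp add: \<sigma>')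
  have transit: "in_transit M (net \<sigma>') = in_transit M (net \<sigma>) + (if mid_of (fst (hd ?b)) = M then 1 else 0)"
    by (simp add: \<sigma>' in_transit_add_mset)
  have hd_mid: "mid_of (fst (hd ?b)) = (q, mCount (wst \<sigma> q))"
    using assms(2) \<open>?b \<noteq> []\<close> unfolding md_inv_def buffer_inv_def by (metis list.set_sel(1) prod.collapse)
  show ?thesis
  proof (cases "mid_of (fst (hd ?b)) = M")
    case True
    then have "q = fst M" using hd_mid by auto
    then have "buffered_part M \<sigma> = hd ?b # buffered_part M \<sigma>'"
      using True filter_tl[OF \<open>?b \<noteq> []\<close>] unfolding buffered_part_def \<sigma>' by auto
    then show ?thesis using step transit True by simp
  next
    case False
    then have "buffered_part M \<sigma>' = buffered_part M \<sigma>"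
      using filter_tl[OF \<open>?b \<noteq> []\<close>] unfolding buffered_part_def \<sigma>' by auto
    then show ?thesis using transit False
      by (intro descends_if_unchanged mid_view_writer_step) (simp_all add: \<sigma>')
  qed
qed

lemma descends_step:
  assumes "trans n f \<Phi> a \<sigma> = Some \<sigma>'" "md_inv f \<sigma>" "Suc f \<le> n"
    and "wfailed (wst \<sigma> (fst M)) \<or> snd M \<le> mCount (wst \<sigma> (fst M))"
  shows "descends n M \<sigma> \<sigma>'"
proof (cases a)
  case MdSend
  then show ?thesis using descends_MdSend assms(1,4) by simp
next
  case SendW
  then show ?thesis using descends_SendW assms(1,2) by simp
next
  case Recv
  then show ?thesis using descends_Recv assms(1,3) by simp
next
  case SendS
  then show ?thesis using descends_SendS assms(1,2) by simp
next
  case Deliver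
  then show ?thesis using descends_Deliver assms(1) by simp
next
  case FailS
  then show ?thesis using descends_FailS assms(1) by simp
qed (use assms(1) in \<open>auto simp: trans_def Let_def pending_def mid_view_def buffered_part_def split: if_splits\<close>)

lemma trans_monotone:
  assumes "trans n f \<Phi> a \<sigma> = Some \<sigma>'"
  shows "wfailed (wst \<sigma> q) \<longrightarrow> wfailed (wst \<sigma>' q)" "mCount (wst \<sigma> q) \<le> mCount (wst \<sigma>' q)"
    and "sfailed (sst \<sigma> i) \<longrightarrow> sfailed (sst \<sigma>' i)"
  using assms by (cases a; auto simp: trans_def Let_def srv_recv_sfailed split: if_splits)+

lemma mCount_MdSend:
  "trans n f \<Phi> (MdSend q t v) \<sigma> = Some \<sigma>' \<Longrightarrow> \<not> wfailed (wst \<sigma> q) \<Longrightarrow>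
     mCount (wst \<sigma>' q) = Suc (mCount (wst \<sigma> q))"
  by (auto simp: trans_def Let_def)

lemma send_buff_SendW:
  "trans n f \<Phi> (SendW q) \<sigma> = Some \<sigma>' \<Longrightarrow> send_buff (wst \<sigma>' q) = tl (send_buff (wst \<sigma> q))"
  by (auto simp: trans_def Let_def split: if_splits)

lemma outQueue_SendS:
  "trans n f \<Phi> (SendS i M) \<sigma> = Some \<sigma>' \<Longrightarrow> outQueue (sst \<sigma>' i) M = tl (outQueue (sst \<sigma> i) M)"
  by (auto simp: trans_def Let_def split: if_splits)

lemma content_Deliver:
  "trans n f \<Phi> (Deliver i M) \<sigma> = Some \<sigma>' \<Longrightarrow> content (sst \<sigma>' i) M = None"
  by (auto simp: trans_def Let_def split: if_splits)

lemma send_buff_eq_buffered_part: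
  assumes "md_inv f \<sigma>" "buffered_part M \<sigma> \<noteq> []"
  shows "send_buff (wst \<sigma> (fst M)) = buffered_part M \<sigma>"
proof -
  let ?b = "send_buff (wst \<sigma> (fst M))"
  have mids: "\<forall>x\<in>set ?b. mid_of (fst x) = (fst M, mCount (wst \<sigma> (fst M)))"
    using assms(1) unfolding md_inv_def buffer_inv_def by auto
  moreover obtain x where "x \<in> set ?b" "mid_of (fst x) = M"
    using assms(2) unfolding buffered_part_def filter_empty_conv by blast
  ultimately have "\<forall>x\<in>set ?b. mid_of (fst x) = M" by simp
  then show ?thesis by (simp add: buffered_part_def)
qed

locale md_execution =
  fixes n f :: nat
    and \<Phi> :: "nat \<Rightarrow> 'v \<Rightarrow> 'c"
    and ex :: "nat \<Rightarrow> ('w,'t,'v,'c) gstate"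
    and act :: "nat \<Rightarrow> ('w,'t,'v,'c) action option"
  assumes execution: "is_execution n f \<Phi> ex act"
    and fairness: "fair n f \<Phi> ex act"
    and enough_servers: "Suc f < n"
begin

lemma execution_step:
  "case act k of None \<Rightarrow> ex (Suc k) = ex k | Some a \<Rightarrow> trans n f \<Phi> a (ex k) = Some (ex (Suc k))"
  using execution unfolding is_execution_def by blast

lemma step: "act k = Some a \<Longrightarrow> trans n f \<Phi> a (ex k) = Some (ex (Suc k))"
  using execution_step[of k] by simp

lemma stutter: "act k = None \<Longrightarrow> ex (Suc k) = ex k"
  using execution_step[of k] by simp

lemma md_inv_reachable: "md_inv f (ex k)"
proof (induction k)
  case 0
  then show ?case using execution md_inv_init by (simp add: is_execution_def)
next
  case (Suc k)
  then show ?case using md_inv_step[OF _ step enough_servers] stutter by (cases "act k") auto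
qed

lemma crash_and_counter_mono_step:
  "(wfailed (wst (ex k) q) \<longrightarrow> wfailed (wst (ex (Suc k)) q))
   \<and> mCount (wst (ex k) q) \<le> mCount (wst (ex (Suc k)) q)
   \<and> (sfailed (sst (ex k) i) \<longrightarrow> sfailed (sst (ex (Suc k)) i))"
proof (cases "act k")
  case None
  then show ?thesis using stutter by simp
next
  case (Some a)
  then show ?thesis using trans_monotone[OF step[OF Some]] by blast
qed

lemma crash_and_counter_mono:
  assumes "k \<le> k'"
  shows "wfailed (wst (ex k) q) \<Longrightarrow> wfailed (wst (ex k') q)"
    and "mCount (wst (ex k) q) \<le> mCount (wst (ex k') q)"
    and "sfailed (sst (ex k) i) \<Longrightarrow> sfailed (sst (ex k') i)"
proof -
  show "wfailed (wst (ex k) q) \<Longrightarrow> wfailed (wst (ex k') q)"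
    using assms by (induction k' rule: dec_induct) (use crash_and_counter_mono_step in blast)+
  show "mCount (wst (ex k) q) \<le> mCount (wst (ex k') q)"
    using assms by (induction k' rule: dec_induct) (use crash_and_counter_mono_step le_trans in blast)+
  show "sfailed (sst (ex k) i) \<Longrightarrow> sfailed (sst (ex k') i)"
    using assms by (induction k' rule: dec_induct) (use crash_and_counter_mono_step in blast)+
qed

lemma sent_mid_retired:
  assumes "act e = Some (MdSend p t v)" "Suc e \<le> k"
  shows "wfailed (wst (ex k) p) \<or> Suc (mCount (wst (ex e) p)) \<le> mCount (wst (ex k) p)"
proof (cases "wfailed (wst (ex e) p)")
  case True
  then show ?thesis using crash_and_counter_mono(1)[of e k] assms(2) by simp
next
  case False
  then have "mCount (wst (ex (Suc e)) p) = Suc (mCount (wst (ex e) p))"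
    by (rule mCount_MdSend[OF step[OF assms(1)]])
  then show ?thesis using crash_and_counter_mono(2)[OF assms(2), of p] by simp
qed

lemma mid_view_eventually_frozen:
  assumes "act e = Some (MdSend p t v)"
  defines "M \<equiv> (p, Suc (mCount (wst (ex e) p)))"
  shows "\<exists>K\<ge>Suc e. \<forall>k\<ge>K. mid_view n M (ex k) = mid_view n M (ex K)"
proof (rule eventually_constant_of_descent[where g = "\<lambda>k. pending n M (ex k)"])
  fix k assume "Suc e \<le> k"
  then have "wfailed (wst (ex k) (fst M)) \<or> snd M \<le> mCount (wst (ex k) (fst M))"
    using sent_mid_retired[OF assms(1)] by (simp add: M_def)
  then show "descends n M (ex k) (ex (Suc k))"
    using descends_step[OF step md_inv_reachable] enough_servers stutter by (cases "act k") auto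
qed

lemma failures_eventually_stable:
  "\<exists>j\<ge>K. \<forall>k\<ge>j. wfailed (wst (ex k) p) = wfailed (wst (ex j) p)
     \<and> (\<forall>i<n. sfailed (sst (ex k) i) = sfailed (sst (ex j) i))"
proof -
  let ?S = "\<lambda>k. {i. i < n \<and> sfailed (sst (ex k) i)}"
  let ?W = "\<lambda>k. {q. q = p \<and> wfailed (wst (ex k) q)}"
  have "\<exists>j0\<ge>K. \<forall>k\<ge>j0. ?S k = ?S j0"
  proof (rule eventually_constant_of_mono_subset[of "{..<n}" ?S])
    show "finite {..<n}" by simp
    show "?S k \<subseteq> {..<n}" for k by auto
    show "?S k \<subseteq> ?S (Suc k)" for k using crash_and_counter_mono(3)[of k "Suc k"] by auto
  qed
  then obtain j0 where j0: "j0 \<ge> K" "\<forall>k\<ge>j0. ?S k = ?S j0" by blast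
  have "\<exists>j\<ge>j0. \<forall>k\<ge>j. ?W k = ?W j"
  proof (rule eventually_constant_of_mono_subset[of "{p}" ?W])
    show "?W k \<subseteq> ?W (Suc k)" for k using crash_and_counter_mono(1)[of k "Suc k"] by auto
  qed auto
  then obtain j where j: "j \<ge> j0" "\<forall>k\<ge>j. ?W k = ?W j" by blast
  have "sfailed (sst (ex k) i) = sfailed (sst (ex j) i)" if "j \<le> k" "i < n" for k i
  proof -
    have "j0 \<le> j" "j0 \<le> k" using j(1) that by simp_all
    then have "?S k = ?S j"
      using j0(2)[rule_format, of k] j0(2)[rule_format, of j] by (simp only:)
    then have "i \<in> ?S k \<longleftrightarrow> i \<in> ?S j" by simp
    then show ?thesis using \<open>i < n\<close> by simp
  qed
  moreover have "wfailed (wst (ex k) p) = wfailed (wst (ex j) p)" if "j \<le> k" for k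
  proof -
    have "?W k = ?W j" using j(2)[rule_format, OF that] .
    then have "p \<in> ?W k \<longleftrightarrow> p \<in> ?W j" by simp
    then show ?thesis by simp
  qed
  moreover have "K \<le> j" using j(1) j0(1) by simp
  ultimately show ?thesis by blast
qed

lemma frozen_enabled_action_absurd:
  assumes "locally_controlled a" "\<And>k. j \<le> k \<Longrightarrow> enabled n f \<Phi> a (ex k)"
    and "\<And>k. j \<le> k \<Longrightarrow> g (ex k) = g (ex j)"
    and "\<And>k. j \<le> k \<Longrightarrow> trans n f \<Phi> a (ex k) = Some (ex (Suc k)) \<Longrightarrow> g (ex (Suc k)) \<noteq> g (ex k)"
  shows False
proof -
  obtain k where "j \<le> k" "act k = Some a"
    using fairness assms(1,2) unfolding fair_def by (meson not_le_imp_less)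
  then show False using assms(3,4) step by (metis le_SucI)
qed

lemma sender_releases:
  assumes frozen: "\<And>k. j \<le> k \<Longrightarrow> buffered_part M (ex k) = buffered_part M (ex j)"
    and alive: "\<And>k. j \<le> k \<Longrightarrow> \<not> wfailed (wst (ex k) (fst M))"
    and "j \<le> k"
  shows "\<not> sender_holds n \<Phi> M v (wst (ex k) (fst M))"
proof
  assume "sender_holds n \<Phi> M v (wst (ex k) (fst M))"
  then obtain m d where "(m, d) \<in> set (send_buff (wst (ex k) (fst M)))" "mid_of m = M"
    unfolding sender_holds_def msg_carries_def by auto
  then have "buffered_part M (ex k) \<noteq> []"
    unfolding buffered_part_def filter_empty_conv by force
  then have buffered: "buffered_part M (ex k') \<noteq> []" if "j \<le> k'" for k'
    using frozen[OF that] frozen[OF assms(3)] by simp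
  then have buff: "send_buff (wst (ex k') (fst M)) = buffered_part M (ex k')" if "j \<le> k'" for k'
    using send_buff_eq_buffered_part[OF md_inv_reachable] that by blast
  show False
  proof (rule frozen_enabled_action_absurd[of "SendW (fst M)" j "buffered_part M"])
    fix k' assume "j \<le> k'"
    then show "enabled n f \<Phi> (SendW (fst M)) (ex k')"
      using alive buffered buff by (simp add: enabled_def trans_def)
  next
    fix k' assume "j \<le> k'" and sent: "trans n f \<Phi> (SendW (fst M)) (ex k') = Some (ex (Suc k'))"
    have "buffered_part M (ex (Suc k')) = send_buff (wst (ex (Suc k')) (fst M))"
      using buff \<open>j \<le> k'\<close> by simp
    also have "\<dots> = tl (buffered_part M (ex k'))"
      using send_buff_SendW[OF sent] buff \<open>j \<le> k'\<close> by simp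
    finally show "buffered_part M (ex (Suc k')) \<noteq> buffered_part M (ex k')"
      using buffered[OF \<open>j \<le> k'\<close>] by (cases "buffered_part M (ex k')") auto
  qed (simp, rule frozen)
qed

lemma server_releases:
  assumes "i < n"
    and frozen: "\<And>k. j \<le> k \<Longrightarrow> server_view M (sst (ex k) i) = server_view M (sst (ex j) i)"
    and alive: "\<And>k. j \<le> k \<Longrightarrow> \<not> sfailed (sst (ex k) i)"
    and "j \<le> k"
  shows "\<not> server_holds n \<Phi> M v (sst (ex k) i)"
proof -
  let ?s = "\<lambda>k. sst (ex k) i"
  have frozen_at: "status (?s k') M = status (?s j) M \<and> content (?s k') M = content (?s j) M
      \<and> outQueue (?s k') M = outQueue (?s j) M" if "j \<le> k'" for k'
    using frozen[OF that] by (simp add: server_view_def)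
  have queue: "outQueue (?s j) M = []"
  proof (rule ccontr)
    assume queued: "outQueue (?s j) M \<noteq> []"
    show False
    proof (rule frozen_enabled_action_absurd[of "SendS i M" j "\<lambda>\<sigma>. server_view M (sst \<sigma> i)"])
      fix k' assume "j \<le> k'"
      then show "enabled n f \<Phi> (SendS i M) (ex k')"
        using \<open>i < n\<close> alive[OF \<open>j \<le> k'\<close>] frozen_at[OF \<open>j \<le> k'\<close>] queued
        by (simp add: enabled_def trans_def Let_def)
    next
      fix k' assume "j \<le> k'" and sent: "trans n f \<Phi> (SendS i M) (ex k') = Some (ex (Suc k'))"
      have "outQueue (?s (Suc k')) M = tl (outQueue (?s k') M)" by (rule outQueue_SendS[OF sent])
      then show "server_view M (?s (Suc k')) \<noteq> server_view M (?s k')"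
        using frozen_at[OF \<open>j \<le> k'\<close>] queued by (cases "outQueue (?s j) M") (auto simp: server_view_def)
    qed (simp, rule frozen)
  qed
  have content: "content (?s j) M = None"
  proof (rule ccontr)
    assume stored: "content (?s j) M \<noteq> None"
    have "server_inv f (?s j)" using md_inv_reachable unfolding md_inv_def by blast
    then have ready: "status (?s j) M = Some Ready"
      using queue stored server_inv_status_Ready by blast
    show False
    proof (rule frozen_enabled_action_absurd[of "Deliver i M" j "\<lambda>\<sigma>. server_view M (sst \<sigma> i)"])
      fix k' assume "j \<le> k'"
      then show "enabled n f \<Phi> (Deliver i M) (ex k')"
        using \<open>i < n\<close> alive[OF \<open>j \<le> k'\<close>] frozen_at[OF \<open>j \<le> k'\<close>] stored ready
        by (simp add: enabled_def trans_def Let_def)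
    next
      fix k' assume "j \<le> k'" and delivered: "trans n f \<Phi> (Deliver i M) (ex k') = Some (ex (Suc k'))"
      have "content (?s (Suc k')) M = None" by (rule content_Deliver[OF delivered])
      then show "server_view M (?s (Suc k')) \<noteq> server_view M (?s k')"
        using frozen_at[OF \<open>j \<le> k'\<close>] stored by (auto simp: server_view_def)
    qed (simp, rule frozen)
  qed
  show ?thesis
    using frozen_at[OF \<open>j \<le> k\<close>] queue content unfolding server_holds_def by auto
qed

lemma mid_data_released:
  assumes frozen: "\<And>k. j \<le> k \<Longrightarrow> mid_view n M (ex k) = mid_view n M (ex j)"
    and stable: "\<forall>k\<ge>j. wfailed (wst (ex k) (fst M)) = wfailed (wst (ex j) (fst M))
      \<and> (\<forall>i<n. sfailed (sst (ex k) i) = sfailed (sst (ex j) i))"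
  shows "(wfailed (wst (ex j) (fst M)) \<or> (\<forall>k\<ge>j. \<not> sender_holds n \<Phi> M v (wst (ex k) (fst M))))
    \<and> (\<forall>i<n. sfailed (sst (ex j) i) \<or> (\<forall>k\<ge>j. \<not> server_holds n \<Phi> M v (sst (ex k) i)))"
proof (intro conjI allI impI)
  show "wfailed (wst (ex j) (fst M)) \<or> (\<forall>k\<ge>j. \<not> sender_holds n \<Phi> M v (wst (ex k) (fst M)))"
  proof (cases "wfailed (wst (ex j) (fst M))")
    case False
    have buffered: "buffered_part M (ex k) = buffered_part M (ex j)" if "j \<le> k" for k
      using mid_view_eqD(1)[OF frozen[OF that]] .
    have alive: "\<not> wfailed (wst (ex k) (fst M))" if "j \<le> k" for k
      using stable[rule_format, OF that] False by simp
    show ?thesis using sender_releases[OF buffered alive] by blast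
  qed simp
next
  fix i assume "i < n"
  show "sfailed (sst (ex j) i) \<or> (\<forall>k\<ge>j. \<not> server_holds n \<Phi> M v (sst (ex k) i))"
  proof (cases "sfailed (sst (ex j) i)")
    case False
    have viewed: "server_view M (sst (ex k) i) = server_view M (sst (ex j) i)" if "j \<le> k" for k
      using mid_view_eqD(2)[OF frozen[OF that] \<open>i < n\<close>] .
    have alive: "\<not> sfailed (sst (ex k) i)" if "j \<le> k" for k
      using stable[rule_format, OF that] \<open>i < n\<close> False by simp
    show ?thesis using server_releases[OF \<open>i < n\<close> viewed alive] by blast
  qed simp
qed

end

theorem theorem2:
  fixes n f k :: nat
    and \<Phi> :: "nat \<Rightarrow> 'v \<Rightarrow> 'c"
    and ex :: "nat \<Rightarrow> ('w, 't::linorder, 'v, 'c) gstate"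
    and act :: "nat \<Rightarrow> ('w, 't, 'v, 'c) action option"
    and e :: nat and p :: 'w and t :: 't and v :: 'v
  assumes "1 \<le> f" and "2 * f + 1 \<le> n"
    and "mds_code n k \<Phi>"
    and "is_execution n f \<Phi> ex act"
    and "fair n f \<Phi> ex act"
    and "crash_bound n f ex"
    and "well_formed act"
    and "act e = Some (MdSend p t v)"
  shows "\<exists>j \<ge> Suc e.
           (wfailed (wst (ex j) p) \<or>
              (\<forall>j' \<ge> j. \<not> sender_holds n \<Phi> (p, Suc (mCount (wst (ex e) p))) v (wst (ex j') p)))
         \<and> (\<forall>i < n. sfailed (sst (ex j) i) \<or>
              (\<forall>j' \<ge> j. \<not> server_holds n \<Phi> (p, Suc (mCount (wst (ex e) p))) v (sst (ex j') i)))"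
proof -
  interpret md_execution n f \<Phi> ex act
    using assms(1,2,4,5) by unfold_locales simp_all
  define M where "M = (p, Suc (mCount (wst (ex e) p)))"
  obtain K where "K \<ge> Suc e" and view: "\<forall>k\<ge>K. mid_view n M (ex k) = mid_view n M (ex K)"
    using mid_view_eventually_frozen[OF assms(8)] unfolding M_def by blast
  obtain j where "j \<ge> K" and stable: "\<forall>k\<ge>j. wfailed (wst (ex k) (fst M)) = wfailed (wst (ex j) (fst M))
      \<and> (\<forall>i<n. sfailed (sst (ex k) i) = sfailed (sst (ex j) i))"
    using failures_eventually_stable by blast
  have frozen: "mid_view n M (ex k) = mid_view n M (ex j)" if "j \<le> k" for k
    using view[rule_format, of k] view[rule_format, of j] \<open>j \<ge> K\<close> that by simp
  have "Suc e \<le> j" using \<open>j \<ge> K\<close> \<open>K \<ge> Suc e\<close> by simp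
  then show ?thesis using mid_data_released[OF frozen stable, of v] unfolding M_def by auto
qed

end
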